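(* Let $\{d_i,\mathcal F_i\}_{i=1}^n$ be a (real-valued) martingale difference sequence. Suppose $v_{i-1}$, $i\in[n]$, are positive $\mathcal F_{i-1}$-measurable random variables such that $\mathbb E[\exp(\lambda d_i)\mid\mathcal F_{i-1}]\le\exp\!\left(\frac{\lambda^2}{2}v_{i-1}\right)$ for all $i\in[n]$ and all $\lambda>0$. Let $S_t=\sum_{i=1}^t d_i$ and $V_t=\sum_{i=1}^t v_{i-1}$. Let $\alpha_i\ge0$ and $\alpha=\max_{i\in[n]}\alpha_i$. Then for all $x,\beta>0$, \[ \Pr\!\left[\bigcup_{t=1}^n\left\{S_t\ge x\ \text{and}\ V_t\le\sum_{i=1}^t\alpha_i d_i+\beta\right\}\right]\le\exp\!\left(-\frac{x}{4\alpha+8\beta/x}\right). \]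
   Context: $[n]=\{1,\dots,n\}$. *)

theory Defs
  imports "HOL-Probability.Probability"
begin

end

theory Submission
  imports Defs
begin

(*
  For weights l_i = lam + mu * alpha_i with mu = 2 * lam^2, the bound on the conditional moment
  generating function makes exp (sum_{i<=t} (l_i d_i - l_i^2 / 2 * v_{i-1})) a nonnegative
  supermartingale starting at 1. Stopped at the first time t with S_t >= x and
  V_t <= sum_{i<=t} alpha_i d_i + beta, it shows that such a time exists with probability at most
  exp (-c) whenever the exponent is at least c at that time. Since 2 * lam * alpha_i <= 1 gives
  l_i^2 / 2 <= mu, the exponent is at least lam x + mu (sum_{i<=t} alpha_i d_i - V_t) >= lam x - mu beta,
  and lam = 2x / (4 alpha x + 8 beta) makes this at least x / (4 alpha + 8 beta / x).
*)

lemma (in sigma_finite_subalgebra) nn_integral_mult_mono_nn_cond_exp: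
  assumes "G \<in> borel_measurable F" "g \<in> borel_measurable M"
    and "AE \<omega> in M. nn_cond_exp M F g \<omega> \<le> h \<omega>"
  shows "(\<integral>\<^sup>+\<omega>. G \<omega> * g \<omega> \<partial>M) \<le> (\<integral>\<^sup>+\<omega>. G \<omega> * h \<omega> \<partial>M)"
proof -
  have "(\<integral>\<^sup>+\<omega>. G \<omega> * g \<omega> \<partial>M) = (\<integral>\<^sup>+\<omega>. G \<omega> * nn_cond_exp M F g \<omega> \<partial>M)"
    using nn_cond_exp_intg[OF assms(1,2)] by simp
  also have "\<dots> \<le> (\<integral>\<^sup>+\<omega>. G \<omega> * h \<omega> \<partial>M)"
    using assms(3) by (intro nn_integral_mono_AE) (auto elim!: eventually_mono intro: mult_left_mono)
  finally show ?thesis .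
qed

lemma (in sigma_finite_subalgebra) nn_cond_exp_mult_le:
  assumes "Y \<in> borel_measurable F" "g \<in> borel_measurable M"
    and "AE \<omega> in M. nn_cond_exp M F g \<omega> \<le> h \<omega>"
  shows "AE \<omega> in M. nn_cond_exp M F (\<lambda>\<omega>. Y \<omega> * g \<omega>) \<omega> \<le> Y \<omega> * h \<omega>"
  using nn_cond_exp_prod[OF assms(1,2)] assms(3)
  by eventually_elim (metis mult_left_mono zero_le)

lemma (in sigma_finite_subalgebra) nn_cond_exp_exp_increment_le:
  fixes Z V D :: "'a \<Rightarrow> real"
  assumes [measurable]: "Z \<in> borel_measurable F" "V \<in> borel_measurable F" "D \<in> borel_measurable M"
    and mgf: "AE \<omega> in M. nn_cond_exp M F (\<lambda>\<omega>. ennreal (exp (L * D \<omega>))) \<omega>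
                \<le> ennreal (exp (L\<^sup>2 / 2 * V \<omega>))"
  shows "AE \<omega> in M. nn_cond_exp M F (\<lambda>\<omega>. ennreal (exp (Z \<omega> - L\<^sup>2 / 2 * V \<omega> + L * D \<omega>))) \<omega>
           \<le> ennreal (exp (Z \<omega>))"
proof -
  let ?Y = "\<lambda>\<omega>. ennreal (exp (Z \<omega> - L\<^sup>2 / 2 * V \<omega>))"
  have "AE \<omega> in M. nn_cond_exp M F (\<lambda>\<omega>. ?Y \<omega> * ennreal (exp (L * D \<omega>))) \<omega>
          \<le> ?Y \<omega> * ennreal (exp (L\<^sup>2 / 2 * V \<omega>))"
    by (rule nn_cond_exp_mult_le[OF _ _ mgf]) measurable
  then show ?thesis
    by (simp add: exp_add exp_diff ennreal_mult[symmetric])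
qed

definition not_hit_before :: "'a set \<Rightarrow> (nat \<Rightarrow> 'a set) \<Rightarrow> nat \<Rightarrow> 'a set" where
  "not_hit_before \<Omega> A t = {\<omega> \<in> \<Omega>. \<forall>s\<in>{1..<t}. \<omega> \<notin> A s}"

lemma not_hit_before_Suc:
  "1 \<le> t \<Longrightarrow> not_hit_before \<Omega> A (Suc t) = not_hit_before \<Omega> A t - A t"
  by (auto simp: not_hit_before_def less_Suc_eq)

lemma UN_eq_UN_first_hit:
  "(\<Union>t\<in>{1..n}. A t \<inter> \<Omega>) = (\<Union>t\<in>{1..n}. not_hit_before \<Omega> A t \<inter> A t)"
proof
  show "(\<Union>t\<in>{1..n}. A t \<inter> \<Omega>) \<subseteq> (\<Union>t\<in>{1..n}. not_hit_before \<Omega> A t \<inter> A t)"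
  proof
    fix \<omega> assume "\<omega> \<in> (\<Union>t\<in>{1..n}. A t \<inter> \<Omega>)"
    then obtain t where t: "t \<in> {1..n}" "\<omega> \<in> A t" "\<omega> \<in> \<Omega>" by auto
    then obtain k where "k \<le> t" "1 \<le> k \<and> \<omega> \<in> A k" "\<forall>s<k. \<not> (1 \<le> s \<and> \<omega> \<in> A s)"
      using ex_least_nat_le[of "\<lambda>s. 1 \<le> s \<and> \<omega> \<in> A s" t] by auto
    with t show "\<omega> \<in> (\<Union>t\<in>{1..n}. not_hit_before \<Omega> A t \<inter> A t)"
      by (auto simp: not_hit_before_def intro!: bexI[of _ k])
  qed
qed (auto simp: not_hit_before_def)

locale finite_filtration = prob_space M for M :: "'a measure" +
  fixes F :: "nat \<Rightarrow> 'a measure" and n :: nat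
  assumes subalgebra_F: "\<And>i. i \<le> n \<Longrightarrow> subalgebra M (F i)"
    and sets_F_mono: "\<And>i j. i \<le> j \<Longrightarrow> j \<le> n \<Longrightarrow> sets (F i) \<subseteq> sets (F j)"
begin

lemma sigma_finite_subalgebra_F: "i \<le> n \<Longrightarrow> sigma_finite_subalgebra M (F i)"
  by (intro finite_measure_subalgebra_is_sigma_finite)
     (simp add: finite_measure_subalgebra_def finite_measure_subalgebra_axioms_def subalgebra_F)

lemma space_F: "i \<le> n \<Longrightarrow> space (F i) = space M"
  using subalgebra_F by (simp add: subalgebra_def)

lemma sets_F_subset: "i \<le> n \<Longrightarrow> sets (F i) \<subseteq> sets M"
  using subalgebra_F by (simp add: subalgebra_def)

lemma measurable_F_mono:
  "i \<le> j \<Longrightarrow> j \<le> n \<Longrightarrow> f \<in> measurable (F i) N \<Longrightarrow> f \<in> measurable (F j) N"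
  by (rule measurable_from_subalg[of "F j"]) (simp_all add: subalgebra_def space_F sets_F_mono)

lemma measurable_F_M: "i \<le> n \<Longrightarrow> f \<in> measurable (F i) N \<Longrightarrow> f \<in> measurable M N"
  using measurable_from_subalg subalgebra_F by blast

lemma predictable_imp_adapted:
  assumes "i \<in> {1..n}" "f \<in> measurable (F (i - 1)) N"
  shows "f \<in> measurable (F i) N"
  using assms(1) by (intro measurable_F_mono[OF _ _ assms(2)]) auto

lemma borel_measurable_F_sum:
  fixes f :: "nat \<Rightarrow> 'a \<Rightarrow> real"
  assumes "t \<le> n" and "\<And>i. i \<in> {1..t} \<Longrightarrow> f i \<in> borel_measurable (F i)"
  shows "(\<lambda>\<omega>. \<Sum>i=1..t. f i \<omega>) \<in> borel_measurable (F t)"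
  using assms by (intro borel_measurable_sum) (auto intro: measurable_F_mono)

lemma not_hit_before_in_F:
  assumes "k \<le> n" and "\<And>t. t \<in> {1..k} \<Longrightarrow> A t \<in> sets (F t)"
  shows "not_hit_before (space M) A (Suc k) \<in> sets (F k)"
proof -
  have "not_hit_before (space M) A (Suc k) = space (F k) - (\<Union>t\<in>{1..k}. A t)"
    using assms(1) by (auto simp: not_hit_before_def space_F)
  also have "\<dots> \<in> sets (F k)"
    using assms sets_F_mono by (intro sets.Diff sets.top sets.finite_UN) auto
  finally show ?thesis .
qed

context
  fixes X :: "nat \<Rightarrow> 'a \<Rightarrow> ennreal" and A :: "nat \<Rightarrow> 'a set"
  assumes X_adapted: "\<And>k. k \<le> n \<Longrightarrow> X k \<in> borel_measurable (F k)"
    and X_supermartingale: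
      "\<And>k. k < n \<Longrightarrow> AE \<omega> in M. nn_cond_exp M (F k) (X (Suc k)) \<omega> \<le> X k \<omega>"
    and A_adapted: "\<And>t. t \<in> {1..n} \<Longrightarrow> A t \<in> sets (F t)"
begin

private abbreviation "C \<equiv> not_hit_before (space M) A"

(* The left-hand side is the integral of X stopped at the first t \<ge> 1 with \<omega> \<in> A t,
   evaluated at time k. *)
lemma nn_integral_stopped_le:
  "k \<le> n \<Longrightarrow> (\<Sum>t=1..k. \<integral>\<^sup>+\<omega>. indicator (C t \<inter> A t) \<omega> * X t \<omega> \<partial>M)
     + (\<integral>\<^sup>+\<omega>. indicator (C (Suc k)) \<omega> * X k \<omega> \<partial>M) \<le> (\<integral>\<^sup>+\<omega>. X 0 \<omega> \<partial>M)"
proof (induction k)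
  case 0
  have "C (Suc 0) = space M" by (simp add: not_hit_before_def)
  then show ?case by (simp cong: nn_integral_cong)
next
  case (Suc k)
  have C_F [measurable]: "C (Suc k) \<in> sets (F k)"
    using Suc.prems A_adapted by (intro not_hit_before_in_F) auto
  have [measurable]: "C (Suc k) \<in> sets M" "A (Suc k) \<in> sets M"
    using Suc.prems C_F A_adapted[of "Suc k"] sets_F_subset[of k] sets_F_subset[of "Suc k"] by auto
  have [measurable]: "X (Suc k) \<in> borel_measurable M"
    using Suc.prems X_adapted measurable_F_M by blast
  have split: "(\<integral>\<^sup>+\<omega>. indicator (C (Suc k) \<inter> A (Suc k)) \<omega> * X (Suc k) \<omega> \<partial>M)
      + (\<integral>\<^sup>+\<omega>. indicator (C (Suc (Suc k))) \<omega> * X (Suc k) \<omega> \<partial>M)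
      = (\<integral>\<^sup>+\<omega>. indicator (C (Suc k)) \<omega> * X (Suc k) \<omega> \<partial>M)"
    by (subst nn_integral_add[symmetric])
       (auto simp: not_hit_before_Suc indicator_def intro!: nn_integral_cong)
  have super: "(\<integral>\<^sup>+\<omega>. indicator (C (Suc k)) \<omega> * X (Suc k) \<omega> \<partial>M)
      \<le> (\<integral>\<^sup>+\<omega>. indicator (C (Suc k)) \<omega> * X k \<omega> \<partial>M)"
    using Suc.prems
    by (intro sigma_finite_subalgebra.nn_integral_mult_mono_nn_cond_exp[OF sigma_finite_subalgebra_F[of k]]
        X_supermartingale) auto
  have "(\<Sum>t=1..Suc k. \<integral>\<^sup>+\<omega>. indicator (C t \<inter> A t) \<omega> * X t \<omega> \<partial>M)
      + (\<integral>\<^sup>+\<omega>. indicator (C (Suc (Suc k))) \<omega> * X (Suc k) \<omega> \<partial>M)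
      = (\<Sum>t=1..k. \<integral>\<^sup>+\<omega>. indicator (C t \<inter> A t) \<omega> * X t \<omega> \<partial>M)
      + (\<integral>\<^sup>+\<omega>. indicator (C (Suc k)) \<omega> * X (Suc k) \<omega> \<partial>M)"
    by (simp add: add.assoc split)
  also have "\<dots> \<le> (\<Sum>t=1..k. \<integral>\<^sup>+\<omega>. indicator (C t \<inter> A t) \<omega> * X t \<omega> \<partial>M)
      + (\<integral>\<^sup>+\<omega>. indicator (C (Suc k)) \<omega> * X k \<omega> \<partial>M)"
    using super by (rule add_left_mono)
  also have "\<dots> \<le> (\<integral>\<^sup>+\<omega>. X 0 \<omega> \<partial>M)"
    using Suc by simp
  finally show ?case .
qed

lemma supermartingale_hitting_bound:
  assumes X_ge: "\<And>t \<omega>. t \<in> {1..n} \<Longrightarrow> \<omega> \<in> A t \<Longrightarrow> c \<le> X t \<omega>"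
  shows "c * emeasure M (\<Union>t\<in>{1..n}. A t) \<le> (\<integral>\<^sup>+\<omega>. X 0 \<omega> \<partial>M)"
proof -
  have A_M [measurable]: "A t \<in> sets M" if "t \<in> {1..n}" for t
    using that A_adapted sets_F_subset by auto
  have CA_M: "C t \<inter> A t \<in> sets M" if "t \<in> {1..n}" for t
    using that by (auto simp: not_hit_before_def)
  have "(\<Union>t\<in>{1..n}. A t) = (\<Union>t\<in>{1..n}. A t \<inter> space M)"
    using sets.sets_into_space[OF A_M] by auto
  also have "\<dots> = (\<Union>t\<in>{1..n}. C t \<inter> A t)"
    by (rule UN_eq_UN_first_hit)
  finally have "c * emeasure M (\<Union>t\<in>{1..n}. A t) \<le> c * (\<Sum>t=1..n. emeasure M (C t \<inter> A t))"
    using CA_M by (auto intro!: mult_left_mono emeasure_subadditive_finite)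
  also have "\<dots> = (\<Sum>t=1..n. \<integral>\<^sup>+\<omega>. c * indicator (C t \<inter> A t) \<omega> \<partial>M)"
    using CA_M by (simp add: sum_distrib_left nn_integral_cmult_indicator)
  also have "\<dots> \<le> (\<Sum>t=1..n. \<integral>\<^sup>+\<omega>. indicator (C t \<inter> A t) \<omega> * X t \<omega> \<partial>M)"
    using X_ge by (intro sum_mono nn_integral_mono) (auto simp: indicator_def)
  also have "\<dots> \<le> (\<integral>\<^sup>+\<omega>. X 0 \<omega> \<partial>M)"
    using nn_integral_stopped_le[of n] by (auto elim: order_trans[rotated])
  finally show ?thesis .
qed

end

lemma exp_supermartingale_hitting_bound:
  fixes d v :: "nat \<Rightarrow> 'a \<Rightarrow> real" and l :: "nat \<Rightarrow> real" and A :: "nat \<Rightarrow> 'a set"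
  assumes d_adapted: "\<And>i. i \<in> {1..n} \<Longrightarrow> d i \<in> borel_measurable (F i)"
    and v_predictable: "\<And>i. i \<in> {1..n} \<Longrightarrow> v (i - 1) \<in> borel_measurable (F (i - 1))"
    and mgf: "\<And>i. i \<in> {1..n} \<Longrightarrow>
       AE \<omega> in M. nn_cond_exp M (F (i - 1)) (\<lambda>\<omega>. ennreal (exp (l i * d i \<omega>))) \<omega>
                   \<le> ennreal (exp ((l i)\<^sup>2 / 2 * v (i - 1) \<omega>))"
    and A_adapted: "\<And>t. t \<in> {1..n} \<Longrightarrow> A t \<in> sets (F t)"
    and exponent_ge: "\<And>t \<omega>. t \<in> {1..n} \<Longrightarrow> \<omega> \<in> A t \<Longrightarrow>
       c \<le> (\<Sum>i=1..t. l i * d i \<omega> - (l i)\<^sup>2 / 2 * v (i - 1) \<omega>)"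
  shows "measure M (\<Union>t\<in>{1..n}. A t) \<le> exp (- c)"
proof -
  define Z where "Z t \<omega> = (\<Sum>i=1..t. l i * d i \<omega> - (l i)\<^sup>2 / 2 * v (i - 1) \<omega>)" for t \<omega>
  have v_adapted: "v (i - 1) \<in> borel_measurable (F i)" if "i \<in> {1..n}" for i
    by (rule predictable_imp_adapted[OF that v_predictable[OF that]])
  have Z_adapted: "Z t \<in> borel_measurable (F t)" if "t \<le> n" for t
    unfolding Z_def using that d_adapted v_adapted by (intro borel_measurable_F_sum) auto
  have exp_Z_adapted: "(\<lambda>\<omega>. ennreal (exp (Z t \<omega>))) \<in> borel_measurable (F t)" if "t \<le> n" for t
  proof -
    note Z_adapted[OF that, measurable]
    show ?thesis by measurable
  qed
  have exp_Z_supermartingale: "AE \<omega> in M. nn_cond_exp M (F k) (\<lambda>\<omega>. ennreal (exp (Z (Suc k) \<omega>))) \<omega>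
      \<le> ennreal (exp (Z k \<omega>))" if "k < n" for k
  proof -
    have k: "Suc k \<in> {1..n}" "k \<le> n" using that by auto
    have "v k \<in> borel_measurable (F k)"
      using v_predictable[OF k(1)] by simp
    moreover have "d (Suc k) \<in> borel_measurable M"
      using k by (intro measurable_F_M[OF _ d_adapted[OF k(1)]]) auto
    moreover have "AE \<omega> in M. nn_cond_exp M (F k) (\<lambda>\<omega>. ennreal (exp (l (Suc k) * d (Suc k) \<omega>))) \<omega>
        \<le> ennreal (exp ((l (Suc k))\<^sup>2 / 2 * v k \<omega>))"
      using mgf[OF k(1)] by simp
    moreover have "Z (Suc k) \<omega> = Z k \<omega> - (l (Suc k))\<^sup>2 / 2 * v k \<omega> + l (Suc k) * d (Suc k) \<omega>"
      for \<omega> by (simp add: Z_def)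
    ultimately show ?thesis
      by (simp only:) (rule sigma_finite_subalgebra.nn_cond_exp_exp_increment_le
          [OF sigma_finite_subalgebra_F[OF k(2)] Z_adapted[OF k(2)]])
  qed
  have "ennreal (exp c) * emeasure M (\<Union>t\<in>{1..n}. A t) \<le> (\<integral>\<^sup>+\<omega>. ennreal (exp (Z 0 \<omega>)) \<partial>M)"
    using exp_Z_adapted exp_Z_supermartingale A_adapted
  proof (rule supermartingale_hitting_bound)
    show "ennreal (exp c) \<le> ennreal (exp (Z t \<omega>))" if "t \<in> {1..n}" "\<omega> \<in> A t" for t \<omega>
      using exponent_ge[OF that] by (simp add: Z_def)
  qed
  then have "exp c * measure M (\<Union>t\<in>{1..n}. A t) \<le> 1"
    by (simp add: Z_def emeasure_eq_measure prob_space ennreal_mult[symmetric])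
  then show ?thesis
    by (simp add: exp_minus field_simps)
qed

lemma deviation_event_in_F:
  fixes d v :: "nat \<Rightarrow> 'a \<Rightarrow> real" and alpha :: "nat \<Rightarrow> real"
  assumes "t \<le> n"
    and d_adapted: "\<And>i. i \<in> {1..n} \<Longrightarrow> d i \<in> borel_measurable (F i)"
    and v_predictable: "\<And>i. i \<in> {1..n} \<Longrightarrow> v (i - 1) \<in> borel_measurable (F (i - 1))"
  shows "{\<omega> \<in> space M. x \<le> (\<Sum>i=1..t. d i \<omega>) \<and>
           (\<Sum>i=1..t. v (i - 1) \<omega>) \<le> (\<Sum>i=1..t. alpha i * d i \<omega>) + \<beta>} \<in> sets (F t)"
proof -
  have v_adapted: "v (i - 1) \<in> borel_measurable (F i)" if "i \<in> {1..n}" for i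
    by (rule predictable_imp_adapted[OF that v_predictable[OF that]])
  have sums: "(\<lambda>\<omega>. \<Sum>i=1..t. d i \<omega>) \<in> borel_measurable (F t)"
      "(\<lambda>\<omega>. \<Sum>i=1..t. v (i - 1) \<omega>) \<in> borel_measurable (F t)"
      "(\<lambda>\<omega>. \<Sum>i=1..t. alpha i * d i \<omega>) \<in> borel_measurable (F t)"
    using \<open>t \<le> n\<close> d_adapted v_adapted by (intro borel_measurable_F_sum; auto)+
  have "{\<omega> \<in> space (F t). x \<le> S \<omega> \<and> V \<omega> \<le> W \<omega> + \<beta>} \<in> sets (F t)"
    if [measurable]: "S \<in> borel_measurable (F t)" "V \<in> borel_measurable (F t)"
      "W \<in> borel_measurable (F t)" for S V W :: "'a \<Rightarrow> real"
    by measurable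
  from this[OF sums] show ?thesis
    using space_F[OF \<open>t \<le> n\<close>] by simp
qed

end

lemma weighted_exponent_ge:
  fixes d v alpha :: "nat \<Rightarrow> real" and lam mu x \<beta> :: real
  assumes "0 \<le> lam" "0 \<le> mu"
    and weight_le: "\<And>i. i \<in> I \<Longrightarrow> (lam + mu * alpha i)\<^sup>2 / 2 \<le> mu"
    and v_nonneg: "\<And>i. i \<in> I \<Longrightarrow> 0 \<le> v i"
    and sum_d_ge: "x \<le> (\<Sum>i\<in>I. d i)"
    and sum_v_le: "(\<Sum>i\<in>I. v i) \<le> (\<Sum>i\<in>I. alpha i * d i) + \<beta>"
  shows "lam * x - mu * \<beta>
    \<le> (\<Sum>i\<in>I. (lam + mu * alpha i) * d i - (lam + mu * alpha i)\<^sup>2 / 2 * v i)"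
proof -
  have "(\<Sum>i\<in>I. (lam + mu * alpha i)\<^sup>2 / 2 * v i) \<le> (\<Sum>i\<in>I. mu * v i)"
    by (intro sum_mono mult_right_mono weight_le v_nonneg)
  also have "\<dots> = mu * (\<Sum>i\<in>I. v i)"
    by (simp add: sum_distrib_left)
  also have "\<dots> \<le> mu * (\<Sum>i\<in>I. alpha i * d i) + mu * \<beta>"
    using mult_left_mono[OF sum_v_le \<open>0 \<le> mu\<close>] by (simp add: distrib_left)
  finally show ?thesis
    using mult_left_mono[OF sum_d_ge \<open>0 \<le> lam\<close>]
    by (simp add: sum_subtractf sum.distrib sum_distrib_left algebra_simps)
qed

lemma tuned_weight_square_le:
  fixes lam \<alpha> :: real
  assumes "0 \<le> lam" "0 \<le> \<alpha>" "2 * lam * \<alpha> \<le> 1"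
  shows "(lam + 2 * lam\<^sup>2 * \<alpha>)\<^sup>2 / 2 \<le> 2 * lam\<^sup>2"
proof -
  have "lam * (2 * lam * \<alpha>) \<le> lam"
    using mult_left_mono[OF assms(3,1)] by simp
  then have "lam + 2 * lam\<^sup>2 * \<alpha> \<le> 2 * lam"
    by (simp add: power2_eq_square algebra_simps)
  then have "(lam + 2 * lam\<^sup>2 * \<alpha>)\<^sup>2 \<le> (2 * lam)\<^sup>2"
    using assms by (intro power_mono) auto
  then show ?thesis by (simp add: power_mult_distrib)
qed

lemma tuned_lambda:
  fixes a x \<beta> :: real
  assumes "0 \<le> a" "0 < x" "0 < \<beta>"
  defines "lam \<equiv> 2 * x / (4 * a * x + 8 * \<beta>)"
  shows tuned_lambda_weight: "\<And>\<alpha>. \<alpha> \<le> a \<Longrightarrow> 2 * lam * \<alpha> \<le> 1"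
    and tuned_lambda_exponent: "x / (4 * a + 8 * \<beta> / x) \<le> lam * x - 2 * lam\<^sup>2 * \<beta>"
proof -
  define D where "D = 4 * a * x + 8 * \<beta>"
  have D_ge: "8 * \<beta> \<le> D" "0 < D"
    using assms by (simp_all add: D_def add_nonneg_pos)
  have lam_D: "lam = 2 * x / D"
    by (simp add: lam_def D_def)
  show "2 * lam * \<alpha> \<le> 1" if "\<alpha> \<le> a" for \<alpha>
  proof -
    have "4 * x * \<alpha> \<le> 4 * a * x"
      using mult_left_mono[OF that, of "4 * x"] assms by (simp add: ac_simps)
    then have "4 * x * \<alpha> \<le> D"
      using assms unfolding D_def by linarith
    then show ?thesis
      using D_ge by (simp add: lam_D)
  qed
  have "1 \<le> 2 - 8 * \<beta> / D"
    using D_ge by simp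
  then have "x\<^sup>2 / D \<le> x\<^sup>2 / D * (2 - 8 * \<beta> / D)"
    using D_ge mult_left_mono[of 1 "2 - 8 * \<beta> / D" "x\<^sup>2 / D"] by simp
  also have "\<dots> = lam * x - 2 * lam\<^sup>2 * \<beta>"
    using D_ge by (simp add: lam_D field_simps power2_eq_square)
  finally show "x / (4 * a + 8 * \<beta> / x) \<le> lam * x - 2 * lam\<^sup>2 * \<beta>"
    using assms by (simp add: D_def field_simps power2_eq_square)
qed

lemma tuned_exponent_ge:
  fixes d v alpha :: "nat \<Rightarrow> real" and a x \<beta> :: real
  assumes "0 \<le> a" "0 < x" "0 < \<beta>"
    and alpha_bounds: "\<And>i. i \<in> I \<Longrightarrow> 0 \<le> alpha i \<and> alpha i \<le> a"
    and v_nonneg: "\<And>i. i \<in> I \<Longrightarrow> 0 \<le> v i"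
    and sum_d_ge: "x \<le> (\<Sum>i\<in>I. d i)"
    and sum_v_le: "(\<Sum>i\<in>I. v i) \<le> (\<Sum>i\<in>I. alpha i * d i) + \<beta>"
  defines "lam \<equiv> 2 * x / (4 * a * x + 8 * \<beta>)"
  shows "x / (4 * a + 8 * \<beta> / x)
    \<le> (\<Sum>i\<in>I. (lam + 2 * lam\<^sup>2 * alpha i) * d i - (lam + 2 * lam\<^sup>2 * alpha i)\<^sup>2 / 2 * v i)"
proof -
  have "0 < lam"
    using assms(1-3) by (simp add: lam_def add_nonneg_pos)
  have "(lam + 2 * lam\<^sup>2 * alpha i)\<^sup>2 / 2 \<le> 2 * lam\<^sup>2" if "i \<in> I" for i
    using \<open>0 < lam\<close> alpha_bounds[OF that] tuned_lambda_weight[OF assms(1-3)]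
    by (intro tuned_weight_square_le) (auto simp: lam_def)
  then have "lam * x - 2 * lam\<^sup>2 * \<beta>
      \<le> (\<Sum>i\<in>I. (lam + 2 * lam\<^sup>2 * alpha i) * d i - (lam + 2 * lam\<^sup>2 * alpha i)\<^sup>2 / 2 * v i)"
    using \<open>0 < lam\<close> v_nonneg sum_d_ge sum_v_le by (intro weighted_exponent_ge) auto
  with tuned_lambda_exponent[OF assms(1-3)] show ?thesis
    unfolding lam_def by linarith
qed

theorem theorem3p3:
  fixes M :: "'a measure" and F :: "nat \<Rightarrow> 'a measure"
    and d v :: "nat \<Rightarrow> 'a \<Rightarrow> real" and alpha :: "nat \<Rightarrow> real"
    and n :: nat and x \<beta> :: real
  assumes "prob_space M"
    and filt_sub: "\<And>i. i \<le> n \<Longrightarrow> subalgebra M (F i)"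
    and filt_mono: "\<And>i j. i \<le> j \<Longrightarrow> j \<le> n \<Longrightarrow> sets (F i) \<subseteq> sets (F j)"
    and d_int: "\<And>i. i \<in> {1..n} \<Longrightarrow> integrable M (d i)"
    and d_adapted: "\<And>i. i \<in> {1..n} \<Longrightarrow> d i \<in> borel_measurable (F i)"
    and d_mds: "\<And>i. i \<in> {1..n} \<Longrightarrow> AE \<omega> in M. real_cond_exp M (F (i - 1)) (d i) \<omega> = 0"
    and v_meas: "\<And>i. i \<in> {1..n} \<Longrightarrow> v (i - 1) \<in> borel_measurable (F (i - 1))"
    and v_pos: "\<And>i \<omega>. i \<in> {1..n} \<Longrightarrow> \<omega> \<in> space M \<Longrightarrow> v (i - 1) \<omega> > 0"
    and mgf: "\<And>i l. i \<in> {1..n} \<Longrightarrow> l > 0 \<Longrightarrow>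
       AE \<omega> in M. nn_cond_exp M (F (i - 1)) (\<lambda>\<omega>'. ennreal (exp (l * d i \<omega>'))) \<omega>
                   \<le> ennreal (exp (l\<^sup>2 / 2 * v (i - 1) \<omega>))"
    and alpha_nonneg: "\<And>i. i \<in> {1..n} \<Longrightarrow> alpha i \<ge> 0"
    and "x > 0" and "\<beta> > 0"
  shows "measure M {\<omega> \<in> space M. \<exists>t\<in>{1..n}.
            (\<Sum>i=1..t. d i \<omega>) \<ge> x \<and>
            (\<Sum>i=1..t. v (i - 1) \<omega>) \<le> (\<Sum>i=1..t. alpha i * d i \<omega>) + \<beta>}
         \<le> exp (- x / (4 * Max (alpha ` {1..n}) + 8 * \<beta> / x))"
proof (cases "n = 0")
  case True
  then show ?thesis by simp
next
  case False
  interpret finite_filtration M F n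
    using \<open>prob_space M\<close> filt_sub filt_mono
    by (simp add: finite_filtration_def finite_filtration_axioms_def)
  define a where "a = Max (alpha ` {1..n})"
  define lam where "lam = 2 * x / (4 * a * x + 8 * \<beta>)"
  define l where "l i = lam + 2 * lam\<^sup>2 * alpha i" for i
  define A where "A t = {\<omega> \<in> space M. x \<le> (\<Sum>i=1..t. d i \<omega>) \<and>
    (\<Sum>i=1..t. v (i - 1) \<omega>) \<le> (\<Sum>i=1..t. alpha i * d i \<omega>) + \<beta>}" for t
  have alpha_bounds: "0 \<le> alpha i \<and> alpha i \<le> a" if "i \<in> {1..n}" for i
    using that alpha_nonneg by (simp add: a_def)
  have "0 \<le> a"
    using alpha_bounds[of 1] False by auto
  then have "0 < lam"
    using \<open>0 < x\<close> \<open>0 < \<beta>\<close> by (simp add: lam_def add_nonneg_pos)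
  have "measure M (\<Union>t\<in>{1..n}. A t) \<le> exp (- (x / (4 * a + 8 * \<beta> / x)))"
  proof (rule exp_supermartingale_hitting_bound[where l = l])
    show "AE \<omega> in M. nn_cond_exp M (F (i - 1)) (\<lambda>\<omega>. ennreal (exp (l i * d i \<omega>))) \<omega>
        \<le> ennreal (exp ((l i)\<^sup>2 / 2 * v (i - 1) \<omega>))" if "i \<in> {1..n}" for i
      using \<open>0 < lam\<close> alpha_bounds[OF that] unfolding l_def
      by (intro mgf[OF that] add_pos_nonneg) auto
    show "x / (4 * a + 8 * \<beta> / x) \<le> (\<Sum>i=1..t. l i * d i \<omega> - (l i)\<^sup>2 / 2 * v (i - 1) \<omega>)"
      if "t \<in> {1..n}" "\<omega> \<in> A t" for t \<omega>
      using that \<open>0 \<le> a\<close> \<open>0 < x\<close> \<open>0 < \<beta>\<close> alpha_bounds v_pos unfolding A_def l_def lam_def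
      by (intro tuned_exponent_ge) (auto intro: less_imp_le)
    show "A t \<in> sets (F t)" if "t \<in> {1..n}" for t
      unfolding A_def using that by (intro deviation_event_in_F[OF _ d_adapted v_meas]) auto
  qed (use d_adapted v_meas in auto)
  moreover have "{\<omega> \<in> space M. \<exists>t\<in>{1..n}. (\<Sum>i=1..t. d i \<omega>) \<ge> x \<and>
      (\<Sum>i=1..t. v (i - 1) \<omega>) \<le> (\<Sum>i=1..t. alpha i * d i \<omega>) + \<beta>} = (\<Union>t\<in>{1..n}. A t)"
    by (auto simp: A_def)
  ultimately show ?thesis
    by (simp add: a_def)
qed

end
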